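(* Let $\mathbf{H}$ be a finite commutative semihypergroup with states $e_1,\dots,e_n$ that is derived from a group. Then any two columns $a_{i,j}$ and $a_{k,l}$ ($1\le i,j,k,l\le n$) are rearrangements of each other, i.e. they have the same multiset of entries. In particular the cube $C=(a_{i,j}(k))_{i,j,k}$ has at most $n$ distinct entries.
   Context: A finite commutative semihypergroup $\mathbf{H}$ with $n$ states $e_1,\dots,e_n$ is given by a convolution $e_i*e_j=\sum_{k=1}^n a_{i,j}(k)e_k$ ($i,j=1,\dots,n$), extended bilinearly, where $a_{i,j}(k)\ge 0$, $\sum_{k=1}^n a_{i,j}(k)=1$ for all $i,j$, the convolution is associative and commutative ($a_{i,j}(k)=a_{j,i}(k)$). Let $a_{i,j}\in\mathbb{R}^n$ denote the column vector $(a_{i,j}(1),\dots,a_{i,j}(n))^T$; let $A_i$ be the $n\times n$ matrix with columns $a_{i,1},\dots,a_{i,n}$ and $B_i$ the matrix with columns $a_{1,i},\dots,a_{n,i}$. $\mathbf{H}$ is called derived from a group if it satisfies condition (A): the set $\{a_{i,j}: 1\le i,j\le n\}$ contains exactly $n$ distinct vectors, and for each $i$ the columns of $A_i$ are linearly independent and the columns of $B_i$ are linearly independent. *)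

theory Defs
  imports Main "HOL-Library.Multiset" Complex_Main
begin

text \<open>States are indexed by 1..n; the structure constants are a i j k = a_{i,j}(k).\<close>

definition comm_semihypergroup :: "nat \<Rightarrow> (nat \<Rightarrow> nat \<Rightarrow> nat \<Rightarrow> real) \<Rightarrow> bool" where
  "comm_semihypergroup n a \<longleftrightarrow>
     (\<forall>i\<in>{1..n}. \<forall>j\<in>{1..n}. \<forall>k\<in>{1..n}. a i j k \<ge> 0) \<and>
     (\<forall>i\<in>{1..n}. \<forall>j\<in>{1..n}. (\<Sum>k=1..n. a i j k) = 1) \<and>
     (\<forall>i\<in>{1..n}. \<forall>j\<in>{1..n}. \<forall>k\<in>{1..n}. a i j k = a j i k) \<and>
     (\<forall>i\<in>{1..n}. \<forall>j\<in>{1..n}. \<forall>l\<in>{1..n}. \<forall>k\<in>{1..n}.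
        (\<Sum>m=1..n. a i j m * a m l k) = (\<Sum>m=1..n. a j l m * a i m k))"

definition col :: "nat \<Rightarrow> (nat \<Rightarrow> nat \<Rightarrow> nat \<Rightarrow> real) \<Rightarrow> nat \<Rightarrow> nat \<Rightarrow> (nat \<Rightarrow> real)" where
  "col n a i j = (\<lambda>k. if k \<in> {1..n} then a i j k else 0)"

definition lin_indep_family :: "nat \<Rightarrow> (nat \<Rightarrow> nat \<Rightarrow> real) \<Rightarrow> bool" where
  "lin_indep_family n v \<longleftrightarrow>
     (\<forall>c :: nat \<Rightarrow> real. (\<forall>k\<in>{1..n}. (\<Sum>j=1..n. c j * v j k) = 0) \<longrightarrow> (\<forall>j\<in>{1..n}. c j = 0))"

definition derived_from_group :: "nat \<Rightarrow> (nat \<Rightarrow> nat \<Rightarrow> nat \<Rightarrow> real) \<Rightarrow> bool" where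
  "derived_from_group n a \<longleftrightarrow>
     card {col n a i j | i j. i \<in> {1..n} \<and> j \<in> {1..n}} = n \<and>
     (\<forall>i\<in>{1..n}. lin_indep_family n (\<lambda>j k. a i j k)) \<and>
     (\<forall>i\<in>{1..n}. lin_indep_family n (\<lambda>j k. a j i k))"

end

theory Submission
  imports Defs
begin

text \<open>By condition (A) the columns of each matrix A_i are n distinct vectors out of only n
  available ones, so any two such matrices differ by a permutation of columns:
  a(i,t) = a(p,\<pi> t). Expanding (e_i * e_j) * e_p = e_i * (e_j * e_p) in the basis formed by the
  columns of A_p and comparing coefficients gives a(i,j)(\<pi> m) = a(p,j)(m), i.e. the column a(i,j)
  is a rearrangement of a(p,j). Commutativity, a(p,j) = a(j,p), then links any two columns.\<close>

lemma lin_indep_family_coeff_unique: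
  assumes "lin_indep_family n v"
    and "\<forall>k\<in>{1..n}. (\<Sum>t=1..n. c t * v t k) = (\<Sum>t=1..n. d t * v t k)"
    and "j \<in> {1..n}"
  shows "c j = d j"
proof -
  have "\<forall>k\<in>{1..n}. (\<Sum>t=1..n. (c t - d t) * v t k) = 0"
    using assms(2) by (simp add: left_diff_distrib sum_subtractf)
  then show ?thesis
    using assms(1,3) unfolding lin_indep_family_def by fastforce
qed

lemma lin_indep_family_inj:
  assumes "lin_indep_family n v" and "j \<in> {1..n}" and "j' \<in> {1..n}"
    and "\<forall>k\<in>{1..n}. v j k = v j' k"
  shows "j = j'"
proof -
  have "\<And>i k. i \<in> {1..n} \<Longrightarrow> (\<Sum>t=1..n. (if t = i then 1 else 0) * v t k) = v i k"
    by (simp add: sum.delta if_distrib[of "\<lambda>x. x * _"] cong: if_cong)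
  then have "(if j = j then 1 else 0 :: real) = (if j = j' then 1 else 0)"
    using assms by (intro lin_indep_family_coeff_unique[OF assms(1)]) auto
  then show ?thesis by (auto split: if_splits)
qed

lemma inj_on_col:
  assumes "lin_indep_family n (\<lambda>j k. a i j k)"
  shows "inj_on (col n a i) {1..n}"
proof (rule inj_onI)
  fix j j' assume j: "j \<in> {1..n}" and j': "j' \<in> {1..n}" and eq: "col n a i j = col n a i j'"
  have "\<forall>k\<in>{1..n}. a i j k = a i j' k"
    using eq unfolding col_def by (metis (mono_tags))
  then show "j = j'" using lin_indep_family_inj[OF assms j j'] by blast
qed

lemma derived_from_group_row_cols:
  assumes "derived_from_group n a" and "i \<in> {1..n}"
  shows "col n a i ` {1..n} = {col n a i j | i j. i \<in> {1..n} \<and> j \<in> {1..n}}"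
proof (rule card_subset_eq)
  have "{col n a i j | i j. i \<in> {1..n} \<and> j \<in> {1..n}} = (\<lambda>(i, j). col n a i j) ` ({1..n} \<times> {1..n})"
    by fastforce
  then show "finite {col n a i j | i j. i \<in> {1..n} \<and> j \<in> {1..n}}" by simp
  show "col n a i ` {1..n} \<subseteq> {col n a i j | i j. i \<in> {1..n} \<and> j \<in> {1..n}}"
    using assms(2) by blast
  have "inj_on (col n a i) {1..n}"
    using assms unfolding derived_from_group_def by (intro inj_on_col) blast
  then show "card (col n a i ` {1..n}) = card {col n a i j | i j. i \<in> {1..n} \<and> j \<in> {1..n}}"
    using assms(1) unfolding derived_from_group_def by (simp add: card_image)
qed

lemma derived_from_group_rows_permuted:
  assumes dg: "derived_from_group n a" and i: "i \<in> {1..n}" and p: "p \<in> {1..n}"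
  obtains \<pi> where "bij_betw \<pi> {1..n} {1..n}" and "\<forall>t\<in>{1..n}. \<forall>k\<in>{1..n}. a i t k = a p (\<pi> t) k"
proof -
  have "col n a i ` {1..n} \<subseteq> col n a p ` {1..n}"
    using derived_from_group_row_cols[OF dg i] derived_from_group_row_cols[OF dg p] by simp
  then have "\<forall>t\<in>{1..n}. \<exists>s\<in>{1..n}. col n a p s = col n a i t"
    by (metis image_eqI image_iff subsetD)
  then obtain \<pi> where \<pi>: "\<And>t. t \<in> {1..n} \<Longrightarrow> \<pi> t \<in> {1..n} \<and> col n a p (\<pi> t) = col n a i t"
    by metis
  have "inj_on \<pi> {1..n}"
  proof (rule inj_onI)
    fix x y assume "x \<in> {1..n}" "y \<in> {1..n}" "\<pi> x = \<pi> y"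
    moreover have "inj_on (col n a i) {1..n}"
      using dg i unfolding derived_from_group_def by (intro inj_on_col) blast
    ultimately show "x = y" using \<pi> by (metis inj_onD)
  qed
  moreover have "\<pi> ` {1..n} \<subseteq> {1..n}" using \<pi> by blast
  ultimately have "bij_betw \<pi> {1..n} {1..n}"
    by (simp add: bij_betw_def endo_inj_surj)
  moreover have "\<forall>t\<in>{1..n}. \<forall>k\<in>{1..n}. a i t k = a p (\<pi> t) k"
    using \<pi> by (metis col_def)
  ultimately show ?thesis using that by blast
qed

lemma comm_semihypergroup_permuted_column:
  assumes sh: "comm_semihypergroup n a" and li: "lin_indep_family n (\<lambda>j k. a p j k)"
    and \<pi>: "bij_betw \<pi> {1..n} {1..n}"
    and row: "\<forall>t\<in>{1..n}. \<forall>k\<in>{1..n}. a i t k = a p (\<pi> t) k"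
    and i: "i \<in> {1..n}" and j: "j \<in> {1..n}" and p: "p \<in> {1..n}" and m: "m \<in> {1..n}"
  shows "a i j (\<pi> m) = a p j m"
proof -
  define \<sigma> where "\<sigma> = inv_into {1..n} \<pi>"
  have \<sigma>: "bij_betw \<sigma> {1..n} {1..n}"
    unfolding \<sigma>_def using \<pi> by (rule bij_betw_inv_into)
  have \<pi>\<sigma>: "\<And>m. m \<in> {1..n} \<Longrightarrow> \<pi> (\<sigma> m) = m"
    unfolding \<sigma>_def using \<pi> by (simp add: bij_betw_inv_into_right)
  have sym: "\<And>x y k. x \<in> {1..n} \<Longrightarrow> y \<in> {1..n} \<Longrightarrow> k \<in> {1..n} \<Longrightarrow> a x y k = a y x k"
    using sh unfolding comm_semihypergroup_def by blast
  have "\<forall>k\<in>{1..n}. (\<Sum>m=1..n. a p (\<pi> j) m * a p m k) = (\<Sum>m=1..n. a p j (\<sigma> m) * a p m k)"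
  proof
    fix k assume k: "k \<in> {1..n}"
    have "(\<Sum>m=1..n. a p (\<pi> j) m * a p m k) = (\<Sum>m=1..n. a i j m * a m p k)"
      using row j by (intro sum.cong) (simp_all add: sym[OF _ p k])
    also have "\<dots> = (\<Sum>m=1..n. a j p m * a i m k)"
      using sh i j p k unfolding comm_semihypergroup_def by blast
    also have "\<dots> = (\<Sum>m=1..n. a p j m * a p (\<pi> m) k)"
      using row k by (intro sum.cong) (simp_all add: sym[OF j p])
    also have "\<dots> = (\<Sum>m=1..n. a p j (\<sigma> m) * a p (\<pi> (\<sigma> m)) k)"
      by (rule sum.reindex_bij_betw[OF \<sigma>, symmetric])
    also have "\<dots> = (\<Sum>m=1..n. a p j (\<sigma> m) * a p m k)"
      using \<pi>\<sigma> by simp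
    finally show "(\<Sum>m=1..n. a p (\<pi> j) m * a p m k) = (\<Sum>m=1..n. a p j (\<sigma> m) * a p m k)" .
  qed
  moreover have \<pi>m: "\<pi> m \<in> {1..n}"
    using \<pi> m by (metis bij_betwE)
  ultimately have "a p (\<pi> j) (\<pi> m) = a p j (\<sigma> (\<pi> m))"
    by (rule lin_indep_family_coeff_unique[OF li])
  moreover have "\<sigma> (\<pi> m) = m"
    unfolding \<sigma>_def using \<pi> m by (simp add: bij_betw_inv_into_left)
  ultimately show ?thesis
    using row j \<pi>m by simp
qed

lemma image_mset_mset_set_bij_betw:
  assumes "bij_betw \<pi> A A"
  shows "image_mset (f \<circ> \<pi>) (mset_set A) = image_mset f (mset_set A)"
  using assms by (simp add: bij_betw_def image_mset_mset_set flip: multiset.map_comp)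

lemma derived_from_group_same_entries_in_column:
  assumes sh: "comm_semihypergroup n a" and dg: "derived_from_group n a"
    and i: "i \<in> {1..n}" and j: "j \<in> {1..n}" and p: "p \<in> {1..n}"
  shows "image_mset (a i j) (mset_set {1..n}) = image_mset (a p j) (mset_set {1..n})"
proof -
  obtain \<pi> where \<pi>: "bij_betw \<pi> {1..n} {1..n}"
    and row: "\<forall>t\<in>{1..n}. \<forall>k\<in>{1..n}. a i t k = a p (\<pi> t) k"
    using derived_from_group_rows_permuted[OF dg i p] .
  have li: "lin_indep_family n (\<lambda>j k. a p j k)"
    using dg p unfolding derived_from_group_def by blast
  have "image_mset (a i j) (mset_set {1..n}) = image_mset (a i j \<circ> \<pi>) (mset_set {1..n})"
    using \<pi> by (simp add: image_mset_mset_set_bij_betw)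
  also have "\<dots> = image_mset (a p j) (mset_set {1..n})"
    using comm_semihypergroup_permuted_column[OF sh li \<pi> row i j p]
    by (intro image_mset_cong) simp
  finally show ?thesis .
qed

lemma derived_from_group_same_entries:
  assumes sh: "comm_semihypergroup n a" and dg: "derived_from_group n a"
    and i: "i \<in> {1..n}" and j: "j \<in> {1..n}"
  shows "image_mset (a i j) (mset_set {1..n}) = image_mset (a 1 1) (mset_set {1..n})"
proof -
  have one: "1 \<in> {1..n}" using i by simp
  have "image_mset (a i j) (mset_set {1..n}) = image_mset (a 1 j) (mset_set {1..n})"
    using derived_from_group_same_entries_in_column[OF sh dg i j one] .
  also have "\<dots> = image_mset (a j 1) (mset_set {1..n})"
    using sh one j unfolding comm_semihypergroup_def by (intro image_mset_cong) simp
  also have "\<dots> = image_mset (a 1 1) (mset_set {1..n})"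
    using derived_from_group_same_entries_in_column[OF sh dg j one one] .
  finally show ?thesis .
qed

theorem corollary1:
  fixes n :: nat and a :: "nat \<Rightarrow> nat \<Rightarrow> nat \<Rightarrow> real"
  assumes "comm_semihypergroup n a"
    and "derived_from_group n a"
  shows "(\<forall>i\<in>{1..n}. \<forall>j\<in>{1..n}. \<forall>k\<in>{1..n}. \<forall>l\<in>{1..n}.
            image_mset (a i j) (mset_set {1..n}) = image_mset (a k l) (mset_set {1..n}))
         \<and> card {a i j k | i j k. i \<in> {1..n} \<and> j \<in> {1..n} \<and> k \<in> {1..n}} \<le> n"
proof
  note same = derived_from_group_same_entries[OF assms]
  show "\<forall>i\<in>{1..n}. \<forall>j\<in>{1..n}. \<forall>k\<in>{1..n}. \<forall>l\<in>{1..n}.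
          image_mset (a i j) (mset_set {1..n}) = image_mset (a k l) (mset_set {1..n})"
    using same by metis
  have "{a i j k | i j k. i \<in> {1..n} \<and> j \<in> {1..n} \<and> k \<in> {1..n}} \<subseteq> a 1 1 ` {1..n}"
  proof clarify
    fix i j k assume i: "i \<in> {1..n}" and j: "j \<in> {1..n}" and k: "k \<in> {1..n}"
    then have "a i j k \<in># image_mset (a i j) (mset_set {1..n})" by simp
    then have "a i j k \<in># image_mset (a 1 1) (mset_set {1..n})"
      by (simp only: same[OF i j])
    then show "a i j k \<in> a 1 1 ` {1..n}" by simp
  qed
  then have "card {a i j k | i j k. i \<in> {1..n} \<and> j \<in> {1..n} \<and> k \<in> {1..n}} \<le> card (a 1 1 ` {1..n})"
    by (intro card_mono) auto
  also have "\<dots> \<le> n" using card_image_le[of "{1..n}" "a 1 1"] by simp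
  finally show "card {a i j k | i j k. i \<in> {1..n} \<and> j \<in> {1..n} \<and> k \<in> {1..n}} \<le> n" .
qed

end
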